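(* Let $\dot x$ be a hereditarily symmetric name for a subset of $\omega$, supported by a countable $\rho$-closed set $A\subseteq\omega_1$. Then there exists a rank-$1$ packet scheme $\mathfrak S$ over $A$ (i.e. with first coordinate $A$) such that $\Vdash\dot x=\dot x_{\mathfrak S}$.
   Context: $\rho:\omega_1\setminus\{0\}\to\omega_1$ is the generic regressive map added by finite partial regressive functions; $\operatorname{Succ}_\rho(\xi)=\{\eta:\rho(\eta)=\xi\}$; a set is $\rho$-closed if closed under $\rho$, $\operatorname{cl}_\rho(A)$ the least $\rho$-closed superset. $\mathbb P_1=\operatorname{Fn}(\omega_1\times\omega\times\omega,2,{<}\omega)$. For $\xi<\omega_1,i<\omega$, $s\subseteq\omega$ finite or cofinite, $\tau^{\mathrm{1cas}}_{\xi,i,s}$ flips the value of a condition at each coordinate $(\zeta,i,n)$ with $n\in s$ and $\zeta\in\{\xi\}\cup\operatorname{Succ}_\rho(\xi)$; $\mathscr G^{\mathrm{1cas}}_\rho$ is the group they generate; $\operatorname{Fix}^{\mathrm{1cas}}_\rho(A)$ is the subgroup acting trivially on coordinates $(\zeta,j,n)$ with $\zeta\in\operatorname{cl}_\rho(A)$; $\mathscr F^{\mathrm{1cas}}_\rho$ is the filter of subgroups generated by these for countable $A$; hereditarily symmetric names are with respect to $(\mathbb P_1,\mathscr G^{\mathrm{1cas}}_\rho,\mathscr F^{\mathrm{1cas}}_\rho)$; a name is supported by $A$ if fixed by $\operatorname{Fix}^{\mathrm{1cas}}_\rho(A)$. A name for a subset of $\omega$ is one all of whose members are pairs $(\check m,r)$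 with $m\in\omega$, $r\in\mathbb P_1$. An exact finite cascade packet is a condition $r\in\mathbb P_1$ whose node-support $\{\xi:\exists i,n\ r(\xi,i,n)\text{ defined}\}$ is finite and $\rho$-closed. A rank-$1$ packet scheme is $\mathfrak S=(A,\langle\mathcal C_m:m<\omega\rangle)$ with $A$ countable $\rho$-closed and each $\mathcal C_m$ a countable family of exact finite cascade packets with node-support $\subseteq A$; $\dot x_{\mathfrak S}=\{(\check m,r):m<\omega, r\in\mathcal C_m\}$. *)

theory Defs
  imports Main "HOL-Library.Countable_Set"
begin

text \<open>A model of \<omega>_1: an uncountable well-order all of whose proper initial
segments are countable; its least element plays the role of 0.\<close>
class omega1 = wellorder + order_bot +
  assumes omega1_uncountable: "uncountable (UNIV :: 'a set)"
  and omega1_countable_below: "countable {..<x}"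

definition regressive :: "('o::omega1 \<Rightarrow> 'o) \<Rightarrow> bool" where
  "regressive \<rho> \<longleftrightarrow> (\<forall>\<xi>. \<xi> \<noteq> bot \<longrightarrow> \<rho> \<xi> < \<xi>)"

definition Succ :: "('o::omega1 \<Rightarrow> 'o) \<Rightarrow> 'o \<Rightarrow> 'o set" where
  "Succ \<rho> \<xi> = {\<eta>. \<eta> \<noteq> bot \<and> \<rho> \<eta> = \<xi>}"

definition rho_closed :: "('o::omega1 \<Rightarrow> 'o) \<Rightarrow> 'o set \<Rightarrow> bool" where
  "rho_closed \<rho> A \<longleftrightarrow> (\<forall>\<xi>\<in>A. \<xi> \<noteq> bot \<longrightarrow> \<rho> \<xi> \<in> A)"

definition cl :: "('o::omega1 \<Rightarrow> 'o) \<Rightarrow> 'o set \<Rightarrow> 'o set" where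
  "cl \<rho> A = \<Inter>{B. A \<subseteq> B \<and> rho_closed \<rho> B}"

text \<open>Conditions of P_1 = Fn(\<omega>_1 \<times> \<omega> \<times> \<omega>, 2, <\<omega>): finite partial functions.\<close>
type_synonym 'o cond = "'o \<times> nat \<times> nat \<Rightarrow> bool option"

definition P1 :: "'o cond set" where
  "P1 = {r. finite (dom r)}"

definition cle :: "'o cond \<Rightarrow> 'o cond \<Rightarrow> bool" where
  "cle q p \<longleftrightarrow> p \<subseteq>\<^sub>m q"

definition finite_or_cofinite :: "nat set \<Rightarrow> bool" where
  "finite_or_cofinite s \<longleftrightarrow> finite s \<or> finite (- s)"

definition tau :: "('o::omega1 \<Rightarrow> 'o) \<Rightarrow> 'o \<Rightarrow> nat \<Rightarrow> nat set \<Rightarrow> 'o cond \<Rightarrow> 'o cond" where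
  "tau \<rho> \<xi> i s r = (\<lambda>(\<zeta>, j, n).
     if j = i \<and> n \<in> s \<and> \<zeta> \<in> {\<xi>} \<union> Succ \<rho> \<xi> then map_option Not (r (\<zeta>, j, n)) else r (\<zeta>, j, n))"

text \<open>The group generated by the generators (each generator is an involution,
so the generated group is the closure of the identity under left
composition with generators).\<close>
inductive_set G1cas :: "('o::omega1 \<Rightarrow> 'o) \<Rightarrow> ('o cond \<Rightarrow> 'o cond) set" for \<rho> where
  G_id: "id \<in> G1cas \<rho>"
| G_step: "\<pi> \<in> G1cas \<rho> \<Longrightarrow> finite_or_cofinite s \<Longrightarrow> tau \<rho> \<xi> i s \<circ> \<pi> \<in> G1cas \<rho>"

definition Fix :: "('o::omega1 \<Rightarrow> 'o) \<Rightarrow> 'o set \<Rightarrow> ('o cond \<Rightarrow> 'o cond) set" where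
  "Fix \<rho> A = {\<pi> \<in> G1cas \<rho>. \<forall>r \<zeta> j n. \<zeta> \<in> cl \<rho> A \<longrightarrow> \<pi> r (\<zeta>, j, n) = r (\<zeta>, j, n)}"

text \<open>Names for subsets of \<omega>: sets of pairs (m-check, r), m \<in> \<omega>, r \<in> P_1.\<close>
type_synonym 'o nat_name = "(nat \<times> 'o cond) set"

definition is_nat_name :: "'o nat_name \<Rightarrow> bool" where
  "is_nat_name x \<longleftrightarrow> (\<forall>(m, r)\<in>x. r \<in> P1)"

definition act :: "('o cond \<Rightarrow> 'o cond) \<Rightarrow> 'o nat_name \<Rightarrow> 'o nat_name" where
  "act \<pi> x = (\<lambda>(m, r). (m, \<pi> r)) ` x"

definition supported_by :: "('o::omega1 \<Rightarrow> 'o) \<Rightarrow> 'o set \<Rightarrow> 'o nat_name \<Rightarrow> bool" where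
  "supported_by \<rho> A x \<longleftrightarrow> (\<forall>\<pi>\<in>Fix \<rho> A. act \<pi> x = x)"

definition in_filter :: "('o::omega1 \<Rightarrow> 'o) \<Rightarrow> ('o cond \<Rightarrow> 'o cond) set \<Rightarrow> bool" where
  "in_filter \<rho> H \<longleftrightarrow> H \<subseteq> G1cas \<rho> \<and> (\<exists>A. countable A \<and> Fix \<rho> A \<subseteq> H)"

text \<open>Hereditarily symmetric name for a subset of \<omega> (the check names m-check
are trivially hereditarily symmetric).\<close>
definition HS_nat_name :: "('o::omega1 \<Rightarrow> 'o) \<Rightarrow> 'o nat_name \<Rightarrow> bool" where
  "HS_nat_name \<rho> x \<longleftrightarrow> is_nat_name x \<and> in_filter \<rho> {\<pi> \<in> G1cas \<rho>. act \<pi> x = x}"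

definition forces_mem :: "'o cond \<Rightarrow> nat \<Rightarrow> 'o nat_name \<Rightarrow> bool" where
  "forces_mem p m x \<longleftrightarrow> (\<forall>q\<in>P1. cle q p \<longrightarrow> (\<exists>q'\<in>P1. cle q' q \<and> (\<exists>r. (m, r) \<in> x \<and> cle q' r)))"

text \<open>The empty condition forces x = y.\<close>
definition forces_eq :: "'o nat_name \<Rightarrow> 'o nat_name \<Rightarrow> bool" where
  "forces_eq x y \<longleftrightarrow> (\<forall>(m, p)\<in>x. forces_mem p m y) \<and> (\<forall>(m, p)\<in>y. forces_mem p m x)"

definition node_support :: "'o cond \<Rightarrow> 'o set" where
  "node_support r = {\<xi>. \<exists>i n. r (\<xi>, i, n) \<noteq> None}"

definition exact_packet :: "('o::omega1 \<Rightarrow> 'o) \<Rightarrow> 'o cond \<Rightarrow> bool" where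
  "exact_packet \<rho> r \<longleftrightarrow> r \<in> P1 \<and> finite (node_support r) \<and> rho_closed \<rho> (node_support r)"

definition packet_scheme :: "('o::omega1 \<Rightarrow> 'o) \<Rightarrow> 'o set \<times> (nat \<Rightarrow> 'o cond set) \<Rightarrow> bool" where
  "packet_scheme \<rho> S \<longleftrightarrow> countable (fst S) \<and> rho_closed \<rho> (fst S) \<and>
     (\<forall>m. countable (snd S m) \<and> (\<forall>r\<in>snd S m. exact_packet \<rho> r \<and> node_support r \<subseteq> fst S))"

definition scheme_name :: "'o set \<times> (nat \<Rightarrow> 'o cond set) \<Rightarrow> 'o nat_name" where
  "scheme_name S = {(m, r). r \<in> snd S m}"

end

theory Submission
  imports Defs
begin

(* Let C_m consist of the exact packets over A that force m \<in> x, so that x_S \<subseteq> x is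
   forced trivially.  Conversely, let q force m \<in> x.  Padding q over a finite \<rho>-closed
   subset of A makes the part r of q lying over A an exact packet, and r still forces
   m \<in> x: given s \<le> r, some group element \<pi> fixing the nodes of A flips s into a condition
   compatible with q, and since \<pi> fixes x, applying \<pi> to a witness below both yields a
   witness below s.  Such a \<pi> is built from generators at nodes outside A, taken from the
   top node down: a generator at \<xi> also moves Succ \<xi>, which lies above \<xi> by regressivity
   and outside A because A is \<rho>-closed. *)

definition flip_cond :: "('o \<times> nat \<times> nat \<Rightarrow> bool) \<Rightarrow> 'o cond \<Rightarrow> 'o cond" where
  "flip_cond \<phi> r = (\<lambda>c. if \<phi> c then map_option Not (r c) else r c)"

definition tau_pattern :: "('o::omega1 \<Rightarrow> 'o) \<Rightarrow> 'o \<Rightarrow> nat \<Rightarrow> nat set \<Rightarrow> 'o \<times> nat \<times> nat \<Rightarrow> bool" where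
  "tau_pattern \<rho> \<xi> i s = (\<lambda>(\<zeta>, j, n). j = i \<and> n \<in> s \<and> \<zeta> \<in> {\<xi>} \<union> Succ \<rho> \<xi>)"

lemma tau_eq_flip_cond: "tau \<rho> \<xi> i s = flip_cond (tau_pattern \<rho> \<xi> i s)"
  by (auto simp: tau_def tau_pattern_def flip_cond_def fun_eq_iff)

lemma tau_pattern_node_ge:
  "regressive \<rho> \<Longrightarrow> tau_pattern \<rho> \<xi> i s (\<zeta>, j, n) \<Longrightarrow> \<xi> \<le> \<zeta>"
  by (auto simp: tau_pattern_def Succ_def regressive_def intro: less_imp_le)

lemma tau_pattern_node_notin:
  "rho_closed \<rho> A \<Longrightarrow> \<xi> \<notin> A \<Longrightarrow> tau_pattern \<rho> \<xi> i s (\<zeta>, j, n) \<Longrightarrow> \<zeta> \<notin> A"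
  by (auto simp: tau_pattern_def Succ_def rho_closed_def)

lemma flip_cond_comp: "flip_cond \<phi> \<circ> flip_cond \<psi> = flip_cond (\<lambda>c. \<phi> c \<noteq> \<psi> c)"
  by (auto simp: flip_cond_def fun_eq_iff option.map_comp o_def option.map_ident)

lemma flip_cond_flip_cond [simp]: "flip_cond \<phi> (flip_cond \<phi> r) = r"
  by (auto simp: flip_cond_def fun_eq_iff option.map_comp o_def option.map_ident)

lemma dom_flip_cond [simp]: "dom (flip_cond \<phi> r) = dom r"
  by (auto simp: flip_cond_def dom_def)

lemma flip_cond_map_le: "p \<subseteq>\<^sub>m q \<Longrightarrow> flip_cond \<phi> p \<subseteq>\<^sub>m flip_cond \<phi> q"
  by (auto simp: map_le_def flip_cond_def dom_def)

lemma flip_cond_P1_iff [simp]: "flip_cond \<phi> r \<in> P1 \<longleftrightarrow> r \<in> P1"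
  by (simp add: P1_def)

lemma exists_G1cas_flip_outside:
  fixes \<rho> :: "'o::omega1 \<Rightarrow> 'o"
  assumes reg: "regressive \<rho>" and A: "rho_closed \<rho> A"
    and "finite D" and "\<forall>c\<in>D. fst c \<notin> A"
  shows "\<exists>\<phi>. flip_cond \<phi> \<in> G1cas \<rho> \<and> (\<forall>c. fst c \<in> A \<longrightarrow> \<not> \<phi> c) \<and> (\<forall>c\<in>D. \<phi> c \<longleftrightarrow> c \<in> T)"
  using assms(3,4)
proof (induction D arbitrary: T rule: finite_ranking_induct[where f = fst])
  case empty
  have "flip_cond (\<lambda>_. False) = id"
    by (auto simp: flip_cond_def fun_eq_iff)
  then show ?case
    using G1cas.G_id by (metis empty_iff)
next
  case (insert c D)
  obtain \<phi> where \<phi>: "flip_cond \<phi> \<in> G1cas \<rho>" "\<forall>c. fst c \<in> A \<longrightarrow> \<not> \<phi> c" "\<forall>d\<in>D. \<phi> d \<longleftrightarrow> d \<in> T"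
    using insert.IH[of T] insert.prems by auto
  show ?case
  proof (cases "\<phi> c \<longleftrightarrow> c \<in> T")
    case True
    then show ?thesis
      using \<phi> by (intro exI[of _ \<phi>]) auto
  next
    case False
    obtain \<xi> i n where c: "c = (\<xi>, i, n)"
      by (cases c) auto
    let ?\<psi> = "tau_pattern \<rho> \<xi> i {n}"
    have "finite_or_cofinite {n}"
      by (simp add: finite_or_cofinite_def)
    from G1cas.G_step[OF \<phi>(1) this, of \<xi> i]
    have G: "flip_cond (\<lambda>d. ?\<psi> d \<noteq> \<phi> d) \<in> G1cas \<rho>"
      unfolding tau_eq_flip_cond flip_cond_comp .
    have \<psi>_D: "\<not> ?\<psi> d" if "d \<in> D" for d
    proof
      assume "?\<psi> d"
      obtain \<zeta> j k where d: "d = (\<zeta>, j, k)"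
        by (cases d) auto
      have "\<zeta> = \<xi>"
        using tau_pattern_node_ge[OF reg] \<open>?\<psi> d\<close> insert.hyps(2)[OF that] c d by force
      then have "d = c"
        using \<open>?\<psi> d\<close> c d by (simp add: tau_pattern_def)
      then show False
        using that False \<phi>(3) by blast
    qed
    have \<psi>_A: "\<not> ?\<psi> d" if "fst d \<in> A" for d
      using tau_pattern_node_notin[OF A, of \<xi>] insert.prems c that by (cases d) auto
    have "?\<psi> c"
      using c by (simp add: tau_pattern_def)
    then show ?thesis
      using G \<phi> \<psi>_D \<psi>_A False by (intro exI[of _ "\<lambda>d. ?\<psi> d \<noteq> \<phi> d"]) auto
  qed
qed

lemma cl_rho_closed: "rho_closed \<rho> A \<Longrightarrow> cl \<rho> A = A"
  by (auto simp: cl_def)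

lemma flip_cond_in_Fix:
  assumes "flip_cond \<phi> \<in> G1cas \<rho>" and "\<forall>c. fst c \<in> A \<longrightarrow> \<not> \<phi> c" and "rho_closed \<rho> A"
  shows "flip_cond \<phi> \<in> Fix \<rho> A"
  using assms unfolding Fix_def cl_rho_closed[OF assms(3)] by (simp add: flip_cond_def)

lemma exists_Fix_flip_compatible:
  fixes \<rho> :: "'o::omega1 \<Rightarrow> 'o"
  assumes reg: "regressive \<rho>" and A: "rho_closed \<rho> A" and "s \<in> P1"
    and agree: "\<forall>c\<in>dom s \<inter> dom q. fst c \<in> A \<longrightarrow> s c = q c"
  shows "\<exists>\<phi>. flip_cond \<phi> \<in> Fix \<rho> A \<and> (\<forall>c\<in>dom s \<inter> dom q. flip_cond \<phi> s c = q c)"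
proof -
  define D where "D = {c \<in> dom s \<inter> dom q. fst c \<notin> A}"
  have "finite D"
    using \<open>s \<in> P1\<close> unfolding D_def P1_def by (auto intro: finite_subset)
  moreover have "\<forall>c\<in>D. fst c \<notin> A"
    by (simp add: D_def)
  ultimately obtain \<phi> where \<phi>: "flip_cond \<phi> \<in> G1cas \<rho>" "\<forall>c. fst c \<in> A \<longrightarrow> \<not> \<phi> c"
      "\<forall>c\<in>D. \<phi> c \<longleftrightarrow> s c \<noteq> q c"
    using exists_G1cas_flip_outside[OF reg A, of D "{c. s c \<noteq> q c}"] by auto
  have "flip_cond \<phi> s c = q c" if c: "c \<in> dom s \<inter> dom q" for c
  proof (cases "fst c \<in> A")
    case True
    then have "\<not> \<phi> c"
      using \<phi>(2) by blast
    then show ?thesis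
      using c agree True by (simp add: flip_cond_def)
  next
    case False
    then have "c \<in> D"
      using c by (simp add: D_def)
    moreover obtain a b where "s c = Some a" "q c = Some b"
      using c by auto
    ultimately show ?thesis
      using \<phi>(3) by (cases a; cases b) (simp_all add: flip_cond_def)
  qed
  then show ?thesis
    using flip_cond_in_Fix[OF \<phi>(1,2) A] by blast
qed

lemma node_support_eq_fst_dom: "node_support r = fst ` dom r"
  by (force simp: node_support_def dom_def)

lemma node_support_restrict: "node_support (r |` (B \<times> UNIV)) = node_support r \<inter> B"
  by (force simp: node_support_eq_fst_dom)

lemma finite_node_support: "r \<in> P1 \<Longrightarrow> finite (node_support r)"
  by (simp add: node_support_eq_fst_dom P1_def)

lemma finite_rho_closed_containing:
  fixes \<rho> :: "'o::omega1 \<Rightarrow> 'o"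
  assumes reg: "regressive \<rho>" and A: "rho_closed \<rho> A" and "\<xi> \<in> A"
  shows "\<exists>F. finite F \<and> \<xi> \<in> F \<and> F \<subseteq> A \<and> rho_closed \<rho> F"
  using \<open>\<xi> \<in> A\<close>
proof (induction \<xi> rule: less_induct)
  case (less \<xi>)
  show ?case
  proof (cases "\<xi> = bot")
    case True
    then show ?thesis
      using less.prems by (intro exI[of _ "{\<xi>}"]) (auto simp: rho_closed_def)
  next
    case False
    then have "\<rho> \<xi> < \<xi>" and "\<rho> \<xi> \<in> A"
      using reg A less.prems by (auto simp: regressive_def rho_closed_def)
    then obtain F where "finite F" "\<rho> \<xi> \<in> F" "F \<subseteq> A" "rho_closed \<rho> F"
      using less.IH by blast
    then show ?thesis
      using less.prems by (intro exI[of _ "insert \<xi> F"]) (auto simp: rho_closed_def)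
  qed
qed

lemma finite_rho_closed_superset:
  fixes \<rho> :: "'o::omega1 \<Rightarrow> 'o"
  assumes reg: "regressive \<rho>" and A: "rho_closed \<rho> A" and "finite N" and "N \<subseteq> A"
  shows "\<exists>F. finite F \<and> N \<subseteq> F \<and> F \<subseteq> A \<and> rho_closed \<rho> F"
  using \<open>finite N\<close> \<open>N \<subseteq> A\<close>
proof (induction N rule: finite_induct)
  case empty
  then show ?case
    by (intro exI[of _ "{}"]) (auto simp: rho_closed_def)
next
  case (insert \<xi> N)
  obtain F where "finite F" "N \<subseteq> F" "F \<subseteq> A" "rho_closed \<rho> F"
    using insert by auto
  moreover obtain F' where "finite F'" "\<xi> \<in> F'" "F' \<subseteq> A" "rho_closed \<rho> F'"
    using finite_rho_closed_containing[OF reg A] insert.prems by blast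
  ultimately show ?case
    by (intro exI[of _ "F \<union> F'"]) (auto simp: rho_closed_def)
qed

lemma exists_extension_exact_packet_over:
  fixes \<rho> :: "'o::omega1 \<Rightarrow> 'o"
  assumes reg: "regressive \<rho>" and A: "rho_closed \<rho> A" and "q \<in> P1"
  shows "\<exists>q'\<in>P1. cle q' q \<and> exact_packet \<rho> (q' |` (A \<times> UNIV)) \<and> node_support (q' |` (A \<times> UNIV)) \<subseteq> A"
proof -
  obtain F where F: "finite F" "node_support q \<inter> A \<subseteq> F" "F \<subseteq> A" "rho_closed \<rho> F"
    using finite_rho_closed_superset[OF reg A, of "node_support q \<inter> A"]
      finite_node_support[OF \<open>q \<in> P1\<close>] by auto
  define pad :: "'o cond" where "pad = (\<lambda>c. if c \<in> F \<times> {(0, 0)} then Some True else None)"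
  have dom_pad: "dom pad = F \<times> {(0, 0)}"
    by (auto simp: pad_def dom_def)
  define q' where "q' = pad ++ q"
  have "node_support q' = node_support q \<union> F"
    unfolding node_support_eq_fst_dom q'_def by (simp add: dom_pad image_Un fst_image_times)
  then have ns: "node_support (q' |` (A \<times> UNIV)) = F"
    using F(2,3) unfolding node_support_restrict by blast
  have "q' \<in> P1"
    using \<open>q \<in> P1\<close> F(1) by (simp add: q'_def P1_def dom_pad)
  moreover have "cle q' q"
    by (simp add: q'_def cle_def)
  moreover have "q' |` (A \<times> UNIV) \<in> P1"
    using \<open>q' \<in> P1\<close> by (simp add: P1_def)
  ultimately show ?thesis
    using F ns by (intro bexI[of _ q']) (simp_all add: exact_packet_def)
qed

lemma inj_graph: "inj Map.graph"
proof (rule injI)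
  fix m m' :: "'a \<Rightarrow> 'b option"
  assume "Map.graph m = Map.graph m'"
  then have "m a = Some b \<longleftrightarrow> m' a = Some b" for a b
    by (metis in_graphD in_graphI)
  then show "m = m'"
    by (metis option.exhaust ext)
qed

lemma countable_finite_maps_on:
  assumes "countable B"
  shows "countable {m :: 'a \<Rightarrow> 'b::countable option. finite (dom m) \<and> dom m \<subseteq> B}"
proof (rule countable_image_inj_on[OF _ inj_on_subset[OF inj_graph subset_UNIV]])
  have "Map.graph ` {m. finite (dom m) \<and> dom m \<subseteq> B} \<subseteq> {G. finite G \<and> G \<subseteq> B \<times> UNIV}"
    by (auto simp: graph_eq_to_snd_dom)
  moreover have "countable {G. finite G \<and> G \<subseteq> B \<times> (UNIV :: 'b set)}"
    using assms by (intro countable_Collect_finite_subset) simp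
  ultimately show "countable (Map.graph ` {m :: 'a \<Rightarrow> 'b option. finite (dom m) \<and> dom m \<subseteq> B})"
    by (rule countable_subset)
qed

lemma countable_P1_node_support_subset:
  assumes "countable A"
  shows "countable {r \<in> P1. node_support r \<subseteq> (A :: 'o set)}"
proof (rule countable_subset)
  show "{r \<in> P1. node_support r \<subseteq> A} \<subseteq> {r. finite (dom r) \<and> dom r \<subseteq> A \<times> UNIV}"
    by (force simp: P1_def node_support_eq_fst_dom)
  show "countable {r :: 'o cond. finite (dom r) \<and> dom r \<subseteq> A \<times> UNIV}"
    using assms by (intro countable_finite_maps_on) simp
qed

lemma forces_mem_mono: "forces_mem p m x \<Longrightarrow> cle q p \<Longrightarrow> forces_mem q m x"
  unfolding forces_mem_def cle_def by (meson map_le_trans)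

lemma forces_mem_of_mem: "(m, p) \<in> x \<Longrightarrow> forces_mem p m x"
  unfolding forces_mem_def cle_def by (blast intro: map_le_refl)

lemma mem_act_of_mem: "(m, r) \<in> x \<Longrightarrow> (m, \<pi> r) \<in> act \<pi> x"
  unfolding act_def by (rule image_eqI[where x = "(m, r)"]) simp_all

lemma map_le_map_add_compatible:
  assumes "\<forall>c\<in>dom f \<inter> dom g. g c = f c"
  shows "f \<subseteq>\<^sub>m f ++ g"
  unfolding map_le_def
proof
  fix c assume c: "c \<in> dom f"
  show "f c = (f ++ g) c"
  proof (cases "g c")
    case (Some b)
    then have "g c = f c"
      using assms c by blast
    then show ?thesis
      using Some by (simp add: map_add_def split: option.split)
  qed (simp add: map_add_def)
qed

lemma forces_mem_restrict_support:
  fixes \<rho> :: "'o::omega1 \<Rightarrow> 'o"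
  assumes reg: "regressive \<rho>" and A: "rho_closed \<rho> A" and x: "supported_by \<rho> A x"
    and "q \<in> P1" and q: "forces_mem q m x"
  shows "forces_mem (q |` (A \<times> UNIV)) m x"
  unfolding forces_mem_def
proof (intro ballI impI)
  fix s assume "s \<in> P1" and s: "cle s (q |` (A \<times> UNIV))"
  have "\<forall>c\<in>dom s \<inter> dom q. fst c \<in> A \<longrightarrow> s c = q c"
    using s by (auto simp: cle_def map_le_def mem_Times_iff)
  then obtain \<phi> where \<pi>: "flip_cond \<phi> \<in> Fix \<rho> A" and compat: "\<forall>c\<in>dom s \<inter> dom q. flip_cond \<phi> s c = q c"
    using exists_Fix_flip_compatible[OF reg A \<open>s \<in> P1\<close>] by blast
  let ?\<pi> = "flip_cond \<phi>"
  define u where "u = q ++ ?\<pi> s"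
  have "u \<in> P1"
    using \<open>s \<in> P1\<close> \<open>q \<in> P1\<close> by (simp add: u_def P1_def)
  moreover have "cle u q"
    using compat map_le_map_add_compatible[of q "?\<pi> s"] by (simp add: u_def cle_def)
  ultimately obtain u' t where "u' \<in> P1" "cle u' u" "(m, t) \<in> x" "cle u' t"
    using q by (auto simp: forces_mem_def)
  have "(m, ?\<pi> t) \<in> x"
    using mem_act_of_mem[OF \<open>(m, t) \<in> x\<close>, of ?\<pi>] x \<pi> by (simp add: supported_by_def)
  moreover have "cle (?\<pi> u') (?\<pi> t)"
    using \<open>cle u' t\<close> by (simp add: cle_def flip_cond_map_le)
  moreover have "cle (?\<pi> u') s"
  proof -
    have "?\<pi> s \<subseteq>\<^sub>m u'"
      using \<open>cle u' u\<close> unfolding u_def cle_def by (metis map_le_map_add map_le_trans)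
    then show ?thesis
      using flip_cond_map_le[of "?\<pi> s" u' \<phi>] by (simp add: cle_def)
  qed
  ultimately show "\<exists>s'\<in>P1. cle s' s \<and> (\<exists>r. (m, r) \<in> x \<and> cle s' r)"
    using \<open>u' \<in> P1\<close> by (intro bexI[of _ "?\<pi> u'"]) auto
qed

definition forcing_packets :: "('o::omega1 \<Rightarrow> 'o) \<Rightarrow> 'o set \<Rightarrow> 'o nat_name \<Rightarrow> nat \<Rightarrow> 'o cond set" where
  "forcing_packets \<rho> A x m = {r. exact_packet \<rho> r \<and> node_support r \<subseteq> A \<and> forces_mem r m x}"

lemma packet_scheme_forcing_packets:
  assumes "countable A" and "rho_closed \<rho> A"
  shows "packet_scheme \<rho> (A, forcing_packets \<rho> A x)"
proof -
  have "countable (forcing_packets \<rho> A x m)" for m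
    using countable_P1_node_support_subset[OF \<open>countable A\<close>]
    by (rule countable_subset[rotated]) (auto simp: forcing_packets_def exact_packet_def)
  then show ?thesis
    using assms by (auto simp: packet_scheme_def forcing_packets_def)
qed

lemma forces_mem_forcing_packets:
  fixes \<rho> :: "'o::omega1 \<Rightarrow> 'o"
  assumes reg: "regressive \<rho>" and A: "rho_closed \<rho> A" and x: "supported_by \<rho> A x"
    and "(m, p) \<in> x"
  shows "forces_mem p m (scheme_name (A, forcing_packets \<rho> A x))"
  unfolding forces_mem_def
proof (intro ballI impI)
  fix q assume "q \<in> P1" "cle q p"
  then obtain q' where q': "q' \<in> P1" "cle q' q" "exact_packet \<rho> (q' |` (A \<times> UNIV))"
      "node_support (q' |` (A \<times> UNIV)) \<subseteq> A"
    using exists_extension_exact_packet_over[OF reg A] by blast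
  have "forces_mem q' m x"
    using forces_mem_of_mem[OF \<open>(m, p) \<in> x\<close>] \<open>cle q p\<close> q'(2) by (meson forces_mem_mono)
  then have "(m, q' |` (A \<times> UNIV)) \<in> scheme_name (A, forcing_packets \<rho> A x)"
    using forces_mem_restrict_support[OF reg A x q'(1)] q'(3,4)
    by (simp add: scheme_name_def forcing_packets_def)
  moreover have "cle q' (q' |` (A \<times> UNIV))"
    by (simp add: cle_def map_le_def)
  ultimately show "\<exists>q''\<in>P1. cle q'' q \<and> (\<exists>r. (m, r) \<in> scheme_name (A, forcing_packets \<rho> A x) \<and> cle q'' r)"
    using q' by blast
qed

theorem theorem4p5:
  fixes \<rho> :: "'o::omega1 \<Rightarrow> 'o" and A :: "'o set" and x :: "'o nat_name"
  assumes "regressive \<rho>"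
    and "HS_nat_name \<rho> x"
    and "countable A" and "rho_closed \<rho> A"
    and "supported_by \<rho> A x"
  shows "\<exists>S. packet_scheme \<rho> S \<and> fst S = A \<and> forces_eq x (scheme_name S)"
proof -
  let ?S = "(A, forcing_packets \<rho> A x)"
  have "\<forall>(m, p)\<in>x. forces_mem p m (scheme_name ?S)"
    using forces_mem_forcing_packets[OF assms(1,4,5)] by blast
  moreover have "\<forall>(m, p)\<in>scheme_name ?S. forces_mem p m x"
    by (auto simp: scheme_name_def forcing_packets_def)
  ultimately have "forces_eq x (scheme_name ?S)"
    by (simp add: forces_eq_def)
  then show ?thesis
    using packet_scheme_forcing_packets[OF assms(3,4)] by auto
qed

end
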